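(* Let $m\ge1$, $\tau_1\ge\tau_2\ge\dots\ge\tau_m>0$, $b_1,\dots,b_m>0$, and $\psi(u)=\frac12u^2+\sum_{j=1}^mb_j\sqrt{\tau_j-u^2}$ for $0\le u<\sqrt{\tau_m}$. Then: (1) $\psi$ has at most one critical point $u_0\in(0,\sqrt{\tau_m})$; if $u_0<u<\sqrt{\tau_m}$ then $\psi'(u)<0$ and $\psi''(u)<0$, while $\psi'(u)>0$ on $(0,u_0)$; and there is at most one $u_1\in(0,u_0)$ with $\psi''(u_1)=0$. (2) If $u_0$ exists, then $\psi'(u)=-u\int_{u_0}^u\sum_{j=1}^m\frac{b_js}{(\tau_j-s^2)^{3/2}}\,ds$ for all $0<u<\sqrt{\tau_m}$; if $u_0$ does not exist, then $|\psi'(u)|\ge u\int_0^u\sum_{j=1}^m\frac{b_js}{(\tau_j-s^2)^{3/2}}\,ds$ for all $0<u<\sqrt{\tau_m}$. (3) If $\sum_{j=1}^m b_j/\sqrt{\tau_j}\le\frac12$, then $\psi'(u)\ge\frac14u$ for all $0<u<\frac12\sqrt{\tau_m}$. If $\sum_{j=1}^m b_j/\sqrt{\tau_j}\ge2$, then $\psi'(u)\le-u$ for all $0<u<\sqrt{\tau_m}$. *)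

theory Defs
  imports "HOL-Analysis.Analysis"
begin

definition psi :: "nat \<Rightarrow> (nat \<Rightarrow> real) \<Rightarrow> (nat \<Rightarrow> real) \<Rightarrow> real \<Rightarrow> real" where
  "psi m b tau u = u\<^sup>2 / 2 + (\<Sum>j=1..m. b j * sqrt (tau j - u\<^sup>2))"

end

theory Submission
  imports Defs
begin

text \<open>With \<open>S u = (\<Sum>j=1..m. b j / sqrt (tau j - u\<^sup>2))\<close> (\<open>weight_sum\<close> below) one has
  \<open>psi' u = u * (1 - S u)\<close>, and \<open>S'\<close> is the integrand of part (2), positive on
  \<open>(0, sqrt (tau m))\<close>. So \<open>S\<close> is strictly increasing, the critical points of \<open>psi\<close> are the
  solutions of \<open>S u = 1\<close>, and \<open>psi'' u = 1 - S u - u * S' u\<close> is strictly decreasing because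
  \<open>u * S' u\<close> increases. Part (2) is the fundamental theorem of calculus for \<open>S\<close>; without a
  critical point, since \<open>S\<close> blows up at \<open>sqrt (tau m)\<close>, the intermediate value theorem forces
  \<open>S 0 \<ge> 1\<close>. Part (3) compares \<open>S u\<close> with \<open>S 0 = (\<Sum>j=1..m. b j / sqrt (tau j))\<close>, using
  \<open>S u \<le> 3/2 * S 0\<close> for \<open>u < sqrt (tau m) / 2\<close>.\<close>

lemma has_real_derivative_sqrt_diff_square:
  fixes c x :: real
  assumes "x\<^sup>2 < c"
  shows "((\<lambda>x. sqrt (c - x\<^sup>2)) has_real_derivative - x / sqrt (c - x\<^sup>2)) (at x)"
  using assms by (auto intro!: derivative_eq_intros simp: field_simps)

lemma powr_three_halves: "0 < (a::real) \<Longrightarrow> a powr (3/2) = a * sqrt a"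
  using powr_add[of a 1 "1/2"] by (simp add: powr_half_sqrt)

lemma has_real_derivative_inverse_sqrt_diff_square:
  fixes a c x :: real
  assumes "x\<^sup>2 < c"
  shows "((\<lambda>x. a / sqrt (c - x\<^sup>2)) has_real_derivative a * x / (c - x\<^sup>2) powr (3/2)) (at x)"
  using assms by (auto intro!: derivative_eq_intros simp: powr_three_halves field_simps)

locale psi_parameters =
  fixes m :: nat and b tau :: "nat \<Rightarrow> real"
  assumes m_pos: "m \<ge> 1"
    and tau_mono: "\<And>i j. 1 \<le> i \<Longrightarrow> i \<le> j \<Longrightarrow> j \<le> m \<Longrightarrow> tau j \<le> tau i"
    and tau_pos: "tau m > 0"
    and b_pos: "\<And>j. 1 \<le> j \<Longrightarrow> j \<le> m \<Longrightarrow> b j > 0"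
begin

definition weight_sum :: "real \<Rightarrow> real" where
  "weight_sum u = (\<Sum>j=1..m. b j / sqrt (tau j - u\<^sup>2))"

definition weight_sum_deriv :: "real \<Rightarrow> real" where
  "weight_sum_deriv s = (\<Sum>j=1..m. b j * s / (tau j - s\<^sup>2) powr (3/2))"

lemma tau_diff_pos: "j \<in> {1..m} \<Longrightarrow> x\<^sup>2 < tau m \<Longrightarrow> 0 < tau j - x\<^sup>2"
  using tau_mono[of j m] by auto

lemma square_less_tau:
  assumes "x \<in> {0<..<sqrt (tau m)}"
  shows "x\<^sup>2 < tau m"
proof -
  have "x\<^sup>2 < (sqrt (tau m))\<^sup>2" using assms by (intro power_strict_mono) auto
  then show ?thesis using tau_pos by simp
qed

lemma has_real_derivative_psi:
  assumes "x\<^sup>2 < tau m"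
  shows "(psi m b tau has_real_derivative x * (1 - weight_sum x)) (at x)"
proof -
  have "((\<lambda>x. x\<^sup>2 / 2) has_real_derivative x) (at x)"
    by (auto intro!: derivative_eq_intros)
  moreover have "((\<lambda>x. \<Sum>j=1..m. b j * sqrt (tau j - x\<^sup>2)) has_real_derivative
      (\<Sum>j=1..m. b j * (- x / sqrt (tau j - x\<^sup>2)))) (at x)"
    by (intro DERIV_sum DERIV_cmult has_real_derivative_sqrt_diff_square)
      (use assms tau_diff_pos in auto)
  ultimately have "(psi m b tau has_real_derivative
      x + (\<Sum>j=1..m. b j * (- x / sqrt (tau j - x\<^sup>2)))) (at x)"
    unfolding psi_def[abs_def] by (rule DERIV_add)
  also have "x + (\<Sum>j=1..m. b j * (- x / sqrt (tau j - x\<^sup>2))) = x * (1 - weight_sum x)"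
    by (simp add: weight_sum_def sum_negf sum_distrib_left algebra_simps)
  finally show ?thesis .
qed

lemma has_real_derivative_weight_sum:
  assumes "x\<^sup>2 < tau m"
  shows "(weight_sum has_real_derivative weight_sum_deriv x) (at x)"
  unfolding weight_sum_def[abs_def] weight_sum_deriv_def
  by (intro DERIV_sum has_real_derivative_inverse_sqrt_diff_square) (use assms tau_diff_pos in auto)

lemma deriv_psi: "x\<^sup>2 < tau m \<Longrightarrow> deriv (psi m b tau) x = x * (1 - weight_sum x)"
  by (rule DERIV_imp_deriv[OF has_real_derivative_psi])

lemma deriv_deriv_psi:
  assumes "x\<^sup>2 < tau m"
  shows "deriv (deriv (psi m b tau)) x = 1 - weight_sum x - x * weight_sum_deriv x"
proof (rule DERIV_imp_deriv)
  have "((\<lambda>x. x * (1 - weight_sum x)) has_real_derivative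
      1 - weight_sum x - x * weight_sum_deriv x) (at x)"
    using assms by (auto intro!: derivative_eq_intros has_real_derivative_weight_sum
      simp: algebra_simps)
  moreover have "open {x::real. x\<^sup>2 < tau m}"
    by (rule open_Collect_less) (auto intro: continuous_intros)
  ultimately show "(deriv (psi m b tau) has_real_derivative
      1 - weight_sum x - x * weight_sum_deriv x) (at x)"
    by (rule has_field_derivative_transform_within_open) (use assms deriv_psi in auto)
qed

lemma weight_sum_strict_mono:
  assumes "0 \<le> u" "u < v" "v\<^sup>2 < tau m"
  shows "weight_sum u < weight_sum v"
  unfolding weight_sum_def
proof (rule sum_strict_mono)
  fix j assume j: "j \<in> {1..m}"
  have "u\<^sup>2 < v\<^sup>2" using assms by (simp add: power_strict_mono)
  then have "sqrt (tau j - v\<^sup>2) < sqrt (tau j - u\<^sup>2)" by simp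
  moreover have "0 < b j" "0 < sqrt (tau j - v\<^sup>2)"
    using b_pos j tau_diff_pos[OF j assms(3)] by auto
  ultimately show "b j / sqrt (tau j - u\<^sup>2) < b j / sqrt (tau j - v\<^sup>2)"
    by (intro divide_strict_left_mono) auto
qed (use m_pos in auto)

lemma weight_sum_mono: "0 \<le> u \<Longrightarrow> u \<le> v \<Longrightarrow> v\<^sup>2 < tau m \<Longrightarrow> weight_sum u \<le> weight_sum v"
  using weight_sum_strict_mono[of u v] by (cases "u = v") auto

lemma weight_sum_deriv_pos:
  assumes "0 < x" "x\<^sup>2 < tau m"
  shows "0 < weight_sum_deriv x"
  unfolding weight_sum_deriv_def
proof (rule sum_pos)
  fix j assume j: "j \<in> {1..m}"
  then have "0 < b j" "0 < tau j - x\<^sup>2" using b_pos tau_diff_pos[OF j assms(2)] by auto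
  then show "0 < b j * x / (tau j - x\<^sup>2) powr (3/2)" using assms(1) by simp
qed (use m_pos in auto)

lemma mult_weight_sum_deriv_mono:
  assumes "0 \<le> u" "u \<le> v" "v\<^sup>2 < tau m"
  shows "u * weight_sum_deriv u \<le> v * weight_sum_deriv v"
proof -
  have uv: "u\<^sup>2 \<le> v\<^sup>2" using assms by (simp add: power_mono)
  have *: "x * weight_sum_deriv x = (\<Sum>j=1..m. b j * x\<^sup>2 / (tau j - x\<^sup>2) powr (3/2))" for x
    by (simp add: weight_sum_deriv_def sum_distrib_left power2_eq_square mult_ac)
  show ?thesis
    unfolding *
  proof (rule sum_mono)
    fix j assume j: "j \<in> {1..m}"
    have "0 < b j" "0 < tau j - v\<^sup>2" using b_pos j tau_diff_pos[OF j assms(3)] by auto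
    moreover have "(tau j - v\<^sup>2) powr (3/2) \<le> (tau j - u\<^sup>2) powr (3/2)"
      using uv \<open>0 < tau j - v\<^sup>2\<close> by (intro powr_mono2) auto
    ultimately show "b j * u\<^sup>2 / (tau j - u\<^sup>2) powr (3/2) \<le> b j * v\<^sup>2 / (tau j - v\<^sup>2) powr (3/2)"
      using uv by (intro frac_le mult_left_mono) auto
  qed
qed

lemma interval_integral_weight_sum_deriv:
  assumes "0 \<le> a" "a\<^sup>2 < tau m" "0 \<le> c" "c\<^sup>2 < tau m"
  shows "(LBINT s=ereal a..ereal c. weight_sum_deriv s) = weight_sum c - weight_sum a"
proof (rule interval_integral_FTC_finite)
  have in_domain: "x\<^sup>2 < tau m" if "min a c \<le> x" "x \<le> max a c" for x
  proof -
    have "x\<^sup>2 \<le> (max a c)\<^sup>2" using that assms by (intro power_mono) auto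
    also have "(max a c)\<^sup>2 < tau m" using assms by (simp add: max_def)
    finally show ?thesis .
  qed
  then show "continuous_on {min a c..max a c} weight_sum_deriv"
    unfolding weight_sum_deriv_def
    by (intro continuous_intros) (use tau_diff_pos in fastforce)+
  fix x assume "min a c \<le> x" "x \<le> max a c"
  then show "(weight_sum has_vector_derivative weight_sum_deriv x) (at x within {min a c..max a c})"
    using in_domain has_real_derivative_weight_sum
    by (auto simp: has_real_derivative_iff_has_vector_derivative[symmetric]
      intro: has_field_derivative_at_within)
qed

lemma weight_sum_unbounded:
  assumes "0 < B"
  obtains w where "0 < w" "w\<^sup>2 < tau m" "B < weight_sum w"
proof -
  have bm: "0 < b m" using b_pos m_pos by auto
  define c where "c = (b m / B)\<^sup>2"
  define d where "d = min (tau m / 2) (c / 2)"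
  have "0 < c" using bm assms by (simp add: c_def)
  then have d: "0 < d" "d < tau m" "d < c"
    using tau_pos by (simp_all add: d_def)
  define w where "w = sqrt (tau m - d)"
  have w2: "tau m - w\<^sup>2 = d" using d(2) by (simp add: w_def)
  have w: "0 < w" "w\<^sup>2 < tau m" using d w2 by (simp_all add: w_def)
  have "sqrt d < b m / B"
    using real_sqrt_less_mono[OF d(3)] bm assms by (simp add: c_def)
  then have "B < b m / sqrt (tau m - w\<^sup>2)"
    using d(1) assms by (simp add: w2 field_simps)
  also have "\<dots> \<le> weight_sum w"
    unfolding weight_sum_def
  proof (rule member_le_sum)
    fix j assume "j \<in> {1..m} - {m}"
    then show "0 \<le> b j / sqrt (tau j - w\<^sup>2)"
      using b_pos[of j] tau_diff_pos[OF _ w(2), of j] by simp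
  qed (use m_pos in auto)
  finally show ?thesis using that w by blast
qed

lemma critical_point_iff: "x \<in> {0<..<sqrt (tau m)} \<Longrightarrow> deriv (psi m b tau) x = 0 \<longleftrightarrow> weight_sum x = 1"
  using deriv_psi[OF square_less_tau] by auto

lemma weight_sum_zero_ge_one_if_no_critical_point:
  assumes "\<nexists>x. x \<in> {0<..<sqrt (tau m)} \<and> deriv (psi m b tau) x = 0"
  shows "1 \<le> weight_sum 0"
proof (rule ccontr)
  assume "\<not> 1 \<le> weight_sum 0"
  moreover obtain w where w: "0 < w" "w\<^sup>2 < tau m" "1 < weight_sum w"
    using weight_sum_unbounded[of 1] by auto
  moreover have "continuous_on {0..w} weight_sum"
  proof (intro continuous_at_imp_continuous_on ballI)
    fix x assume "x \<in> {0..w}"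
    then have "x\<^sup>2 \<le> w\<^sup>2" by (intro power_mono) auto
    with w(2) have "x\<^sup>2 < tau m" by linarith
    then show "isCont weight_sum x"
      by (rule DERIV_isCont[OF has_real_derivative_weight_sum])
  qed
  ultimately obtain x where x: "0 \<le> x" "x \<le> w" "weight_sum x = 1"
    using IVT'[of weight_sum 0 1 w] by auto
  with \<open>\<not> 1 \<le> weight_sum 0\<close> have "0 < x" by (cases "x = 0") auto
  moreover have "x\<^sup>2 < tau m"
    using x w(2) power_mono[of x w 2] by linarith
  ultimately have x_in: "x \<in> {0<..<sqrt (tau m)}" by (simp add: real_less_rsqrt)
  then have "deriv (psi m b tau) x = 0" using x(3) by (simp add: critical_point_iff)
  with x_in assms show False by blast
qed

lemma critical_point_unique:
  assumes "u \<in> {0<..<sqrt (tau m)}" "v \<in> {0<..<sqrt (tau m)}"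
    and "deriv (psi m b tau) u = 0" "deriv (psi m b tau) v = 0"
  shows "u = v"
proof -
  have "weight_sum u = weight_sum v"
    using assms critical_point_iff by simp
  moreover have "u\<^sup>2 < tau m" "v\<^sup>2 < tau m"
    using assms(1,2) by (simp_all add: square_less_tau)
  ultimately show ?thesis
    using assms(1,2) weight_sum_strict_mono[of u v] weight_sum_strict_mono[of v u]
    by (cases u v rule: linorder_cases) simp_all
qed

lemma deriv_psi_pos_before_critical_point:
  assumes "u0 \<in> {0<..<sqrt (tau m)}" "deriv (psi m b tau) u0 = 0" "u \<in> {0<..<u0}"
  shows "deriv (psi m b tau) u > 0"
proof -
  have u: "u \<in> {0<..<sqrt (tau m)}" using assms(1,3) by auto
  have "weight_sum u < weight_sum u0"
    using assms(1,3) square_less_tau[OF assms(1)] by (intro weight_sum_strict_mono) auto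
  also have "weight_sum u0 = 1" using assms(1,2) critical_point_iff by simp
  finally show ?thesis
    using u square_less_tau[OF u] by (simp add: deriv_psi)
qed

lemma deriv_psi_neg_after_critical_point:
  assumes "u0 \<in> {0<..<sqrt (tau m)}" "deriv (psi m b tau) u0 = 0" "u \<in> {u0<..<sqrt (tau m)}"
  shows "deriv (psi m b tau) u < 0" "deriv (deriv (psi m b tau)) u < 0"
proof -
  have u: "0 < u" "u\<^sup>2 < tau m" using assms(1,3) square_less_tau[of u] by auto
  have "1 = weight_sum u0" using assms(1,2) critical_point_iff by simp
  also have "weight_sum u0 < weight_sum u"
    using assms(1,3) u by (intro weight_sum_strict_mono) auto
  finally have "1 < weight_sum u" .
  moreover have "0 < u * weight_sum_deriv u"
    using u weight_sum_deriv_pos by simp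
  ultimately show "deriv (psi m b tau) u < 0" "deriv (deriv (psi m b tau)) u < 0"
    using u by (simp_all add: deriv_psi deriv_deriv_psi mult_pos_neg)
qed

lemma deriv_deriv_psi_strict_antimono:
  assumes "0 \<le> u" "u < v" "v\<^sup>2 < tau m"
  shows "deriv (deriv (psi m b tau)) v < deriv (deriv (psi m b tau)) u"
proof -
  have "u\<^sup>2 < tau m" using assms power_strict_mono[of u v 2] by linarith
  then show ?thesis
    using assms weight_sum_strict_mono[of u v] mult_weight_sum_deriv_mono[of u v]
    by (simp add: deriv_deriv_psi)
qed

lemma inflection_point_unique:
  assumes "u \<in> {0<..<sqrt (tau m)}" "v \<in> {0<..<sqrt (tau m)}"
    and "deriv (deriv (psi m b tau)) u = 0" "deriv (deriv (psi m b tau)) v = 0"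
  shows "u = v"
  using assms deriv_deriv_psi_strict_antimono[of u v] deriv_deriv_psi_strict_antimono[of v u]
  by (cases u v rule: linorder_cases) (auto simp: square_less_tau)

lemma deriv_psi_eq_integral:
  assumes "u0 \<in> {0<..<sqrt (tau m)}" "deriv (psi m b tau) u0 = 0" "u \<in> {0<..<sqrt (tau m)}"
  shows "deriv (psi m b tau) u = - u * (LBINT s=ereal u0..ereal u. weight_sum_deriv s)"
  using assms square_less_tau[of u0] square_less_tau[of u]
  by (simp add: interval_integral_weight_sum_deriv critical_point_iff deriv_psi algebra_simps)

lemma abs_deriv_psi_ge_integral:
  assumes "\<nexists>x. x \<in> {0<..<sqrt (tau m)} \<and> deriv (psi m b tau) x = 0" "u \<in> {0<..<sqrt (tau m)}"
  shows "u * (LBINT s=ereal 0..ereal u. weight_sum_deriv s) \<le> \<bar>deriv (psi m b tau) u\<bar>"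
proof -
  have u: "0 < u" "u\<^sup>2 < tau m" using assms(2) square_less_tau by auto
  have "u * (LBINT s=ereal 0..ereal u. weight_sum_deriv s) = u * (weight_sum u - weight_sum 0)"
    using u tau_pos by (simp add: interval_integral_weight_sum_deriv)
  also have "\<dots> \<le> u * (weight_sum u - 1)"
    using u weight_sum_zero_ge_one_if_no_critical_point[OF assms(1)] by simp
  also have "\<dots> \<le> \<bar>deriv (psi m b tau) u\<bar>"
    using u by (simp add: deriv_psi abs_mult algebra_simps)
  finally show ?thesis .
qed

lemma deriv_psi_ge_if_small_weights:
  assumes "(\<Sum>j=1..m. b j / sqrt (tau j)) \<le> 1/2" "u \<in> {0<..<sqrt (tau m) / 2}"
  shows "u / 4 \<le> deriv (psi m b tau) u"
proof -
  have "u\<^sup>2 < (sqrt (tau m) / 2)\<^sup>2" using assms by (intro power_strict_mono) auto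
  then have u4: "u\<^sup>2 < tau m / 4" using tau_pos by (simp add: power_divide)
  then have u: "u\<^sup>2 < tau m" using tau_pos by linarith
  have "weight_sum u \<le> (\<Sum>j=1..m. 3/2 * (b j / sqrt (tau j)))"
    unfolding weight_sum_def
  proof (rule sum_mono)
    fix j assume j: "j \<in> {1..m}"
    have tau_j: "tau m \<le> tau j" using tau_mono j by auto
    have "(2/3 * sqrt (tau j))\<^sup>2 = 4/9 * tau j"
      using tau_j tau_pos by (simp add: power_mult_distrib power_divide)
    also have "\<dots> \<le> tau j - u\<^sup>2" using u4 tau_j tau_pos by linarith
    finally have "(2/3 * sqrt (tau j))\<^sup>2 \<le> tau j - u\<^sup>2" .
    then have "2/3 * sqrt (tau j) \<le> sqrt (tau j - u\<^sup>2)" by (rule real_le_rsqrt)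
    moreover have "0 < b j" "0 < sqrt (tau j)" "0 < sqrt (tau j - u\<^sup>2)"
      using b_pos j tau_j tau_pos tau_diff_pos[OF j u] by auto
    ultimately have "b j / sqrt (tau j - u\<^sup>2) \<le> b j / (2/3 * sqrt (tau j))"
      by (intro divide_left_mono) auto
    then show "b j / sqrt (tau j - u\<^sup>2) \<le> 3/2 * (b j / sqrt (tau j))" by simp
  qed
  also have "\<dots> = 3/2 * (\<Sum>j=1..m. b j / sqrt (tau j))" by (rule sum_distrib_left[symmetric])
  also have "\<dots> \<le> 3/4" using assms(1) by linarith
  finally show ?thesis using assms(2) u by (simp add: deriv_psi)
qed

lemma deriv_psi_le_if_large_weights:
  assumes "2 \<le> (\<Sum>j=1..m. b j / sqrt (tau j))" "u \<in> {0<..<sqrt (tau m)}"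
  shows "deriv (psi m b tau) u \<le> - u"
proof -
  have "2 \<le> weight_sum u"
    using assms weight_sum_mono[of 0 u] square_less_tau[of u] by (simp add: weight_sum_def)
  then show ?thesis
    using assms(2) square_less_tau[of u] by (simp add: deriv_psi algebra_simps)
qed

end

theorem lemma7p1:
  fixes m :: nat and b tau :: "nat \<Rightarrow> real"
  assumes m: "m \<ge> 1"
    and tau_mono: "\<And>i j. 1 \<le> i \<Longrightarrow> i \<le> j \<Longrightarrow> j \<le> m \<Longrightarrow> tau j \<le> tau i"
    and tau_pos: "tau m > 0"
    and b_pos: "\<And>j. 1 \<le> j \<Longrightarrow> j \<le> m \<Longrightarrow> b j > 0"
  shows
    \<comment> \<open>(1)\<close>
    "(\<forall>u0\<in>{0<..<sqrt (tau m)}. \<forall>v0\<in>{0<..<sqrt (tau m)}.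
        deriv (psi m b tau) u0 = 0 \<longrightarrow> deriv (psi m b tau) v0 = 0 \<longrightarrow> u0 = v0)
   \<and> (\<forall>u0\<in>{0<..<sqrt (tau m)}. deriv (psi m b tau) u0 = 0 \<longrightarrow>
        (\<forall>u\<in>{u0<..<sqrt (tau m)}. deriv (psi m b tau) u < 0 \<and> deriv (deriv (psi m b tau)) u < 0)
      \<and> (\<forall>u\<in>{0<..<u0}. deriv (psi m b tau) u > 0)
      \<and> (\<forall>u1\<in>{0<..<u0}. \<forall>u2\<in>{0<..<u0}.
           deriv (deriv (psi m b tau)) u1 = 0 \<longrightarrow> deriv (deriv (psi m b tau)) u2 = 0 \<longrightarrow> u1 = u2))
   \<comment> \<open>(2)\<close>
   \<and> (\<forall>u0\<in>{0<..<sqrt (tau m)}. deriv (psi m b tau) u0 = 0 \<longrightarrow>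
        (\<forall>u\<in>{0<..<sqrt (tau m)}. deriv (psi m b tau) u =
           - u * (LBINT s=ereal u0..ereal u. (\<Sum>j=1..m. b j * s / (tau j - s\<^sup>2) powr (3/2)))))
   \<and> ((\<nexists>u0. u0 \<in> {0<..<sqrt (tau m)} \<and> deriv (psi m b tau) u0 = 0) \<longrightarrow>
        (\<forall>u\<in>{0<..<sqrt (tau m)}. \<bar>deriv (psi m b tau) u\<bar> \<ge>
           u * (LBINT s=ereal 0..ereal u. (\<Sum>j=1..m. b j * s / (tau j - s\<^sup>2) powr (3/2)))))
   \<comment> \<open>(3)\<close>
   \<and> ((\<Sum>j=1..m. b j / sqrt (tau j)) \<le> 1/2 \<longrightarrow>
        (\<forall>u\<in>{0<..<sqrt (tau m) / 2}. deriv (psi m b tau) u \<ge> u / 4))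
   \<and> ((\<Sum>j=1..m. b j / sqrt (tau j)) \<ge> 2 \<longrightarrow>
        (\<forall>u\<in>{0<..<sqrt (tau m)}. deriv (psi m b tau) u \<le> - u))"
proof -
  interpret psi_parameters m b tau
    using assms by unfold_locales
  have "{0<..<u0} \<subseteq> {0<..<sqrt (tau m)}" if "u0 \<in> {0<..<sqrt (tau m)}" for u0
    using that by auto
  then show ?thesis
    unfolding weight_sum_deriv_def[abs_def, symmetric]
    using critical_point_unique deriv_psi_neg_after_critical_point
      deriv_psi_pos_before_critical_point inflection_point_unique
      deriv_psi_eq_integral abs_deriv_psi_ge_integral
      deriv_psi_ge_if_small_weights deriv_psi_le_if_large_weights
    by (meson subsetD)
qed

end
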